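(* Let $k\ge1$, $\lambda=(\lambda_1,\dots,\lambda_k)\in(0,\infty)^k$ and $f(x)=\prod_{i=1}^k{\sf Exp}[\lambda_i,x_i]$. Then for all $x\in(0,\infty)^k$, $${\sf Op}_k(f)(x)=\sum_{\tau}w_\tau(\lambda)\prod_{i=1}^k{\sf Exp}\big[F_{\tau,i}(\lambda),x_i\big],$$ the sum being over all permutations $\tau$ of $\{0,1,\dots,k\}$.
   Context: ${\sf Exp}[\lambda,x]=\lambda e^{-\lambda x}1_{x\ge0}$. $\Phi_g$ is the centred Gaussian density of variance $g>0$. For $x\in\mathbb{R}^k$ set $\bar x_0=0$, $\bar x_i=x_1+\dots+x_i$. For $g\in(0,\infty)^k$, $\Psi_g(x)=\sum_\tau\prod_{i=1}^k\Phi_{g_i}(\bar x_{\tau(i)}-\bar x_{\tau(i-1)})1_{x_i>0}$ (sum over permutations $\tau$ of $\{0,\dots,k\}$), and ${\sf Op}_k(f)(x)=\int_{(0,\infty)^k}f(g)\Psi_g(x)\,dg_1\cdots dg_k$. For a permutation $\tau$ of $\{0,\dots,k\}$, $c\in(0,\infty)^k$ and $i\in\{1,\dots,k\}$: $E_{\tau,i}=\{j\in\{1,\dots,k\}:\min(\tau(j-1),\tau(j))<i\le\max(\tau(j-1),\tau(j))\}$ (the indices $j$ such that $x_i$ appears in $|\bar x_{\tau(j)}-\bar x_{\tau(j-1)}|$), $F_{\tau,i}(c)=\sum_{j\in E_{\tau,i}}\sqrt{2c_j}$, and $w_\tau(c)=2^{-k}\prod_{i=1}^k\sqrt{2c_i}/F_{\tau,i}(c)$.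 *)

theory Defs
  imports "HOL-Analysis.Analysis"
begin

definition ExpD :: "real \<Rightarrow> real \<Rightarrow> real" where
  "ExpD lam x = (if x \<ge> 0 then lam * exp (- lam * x) else 0)"

definition Phi :: "real \<Rightarrow> real \<Rightarrow> real" where
  "Phi g y = exp (- (y\<^sup>2) / (2 * g)) / sqrt (2 * pi * g)"

definition xbar :: "(nat \<Rightarrow> real) \<Rightarrow> nat \<Rightarrow> real" where
  "xbar x i = (\<Sum>j=1..i. x j)"

definition Psi :: "nat \<Rightarrow> (nat \<Rightarrow> real) \<Rightarrow> (nat \<Rightarrow> real) \<Rightarrow> real" where
  "Psi k g x = (\<Sum>\<tau>\<in>{\<tau>. \<tau> permutes {0..k}}.
      \<Prod>i=1..k. Phi (g i) (xbar x (\<tau> i) - xbar x (\<tau> (i - 1))) * (if x i > 0 then 1 else 0))"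

text \<open>Op_k(f)(x) = integral over (0,oo)^k of f(g) Psi_g(x) dg (Lebesgue measure on R^k,
  realised as the product of k copies of lborel on coordinates 1..k).\<close>
definition Op :: "nat \<Rightarrow> ((nat \<Rightarrow> real) \<Rightarrow> real) \<Rightarrow> (nat \<Rightarrow> real) \<Rightarrow> real" where
  "Op k f x = (\<integral>g. indicator (PiE {1..k} (\<lambda>_. {0<..})) g * f g * Psi k g x
                  \<partial>(PiM {1..k} (\<lambda>_. lborel)))"

definition E_set :: "nat \<Rightarrow> (nat \<Rightarrow> nat) \<Rightarrow> nat \<Rightarrow> nat set" where
  "E_set k \<tau> i = {j\<in>{1..k}. min (\<tau> (j - 1)) (\<tau> j) < i \<and> i \<le> max (\<tau> (j - 1)) (\<tau> j)}"

definition F_fun :: "nat \<Rightarrow> (nat \<Rightarrow> nat) \<Rightarrow> nat \<Rightarrow> (nat \<Rightarrow> real) \<Rightarrow> real" where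
  "F_fun k \<tau> i c = (\<Sum>j\<in>E_set k \<tau> i. sqrt (2 * c j))"

definition w_fun :: "nat \<Rightarrow> (nat \<Rightarrow> nat) \<Rightarrow> (nat \<Rightarrow> real) \<Rightarrow> real" where
  "w_fun k \<tau> c = (1 / 2 ^ k) * (\<Prod>i=1..k. sqrt (2 * c i) / F_fun k \<tau> i c)"

end

theory Submission
  imports Defs "HOL-Probability.Probability"
begin

text \<open>
  Expanding \<open>Psi k g x\<close> as a sum over permutations \<open>\<tau>\<close> of products of one-variable factors,
  Fubini turns \<open>Op k f x\<close> into a sum over \<open>\<tau>\<close> of products of Laplace transforms of the heat
  kernel, \<open>\<integral>\<^sub>0\<^sup>\<infinity> lam e^(-lam t) Phi t d dt = sqrt(2 lam)/2 e^(-sqrt(2 lam) |d|)\<close>. Substituting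
  \<open>t = u\<^sup>2\<close> and completing the square makes this a Gaussian integral in \<open>u - c/u\<close>, which the
  Cauchy--Schloemilch substitution \<open>v = u - c/u\<close> evaluates. Finally, the difference of partial sums
  \<open>|xbar x (\<tau> j) - xbar x (\<tau> (j - 1))|\<close> is the sum of the \<open>x i\<close> with \<open>j \<in> E_set k \<tau> i\<close>, so the
  exponents regroup into \<open>\<Sum>\<^sub>i F_fun k \<tau> i lam * x i\<close>; these rates are positive because the walk
  \<open>\<tau> 0, \<dots>, \<tau> k\<close> visits both \<open>0\<close> and \<open>i\<close>.
\<close>

section \<open>Gaussian integrals and the Cauchy--Schloemilch substitution\<close>

lemma has_bochner_integral_lborel_indicator_iff:
  fixes f :: "real \<Rightarrow> real"
  assumes "(\<lambda>x. indicator S x *\<^sub>R f x) \<in> borel_measurable borel"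
  shows "has_bochner_integral lborel (\<lambda>x. indicator S x *\<^sub>R f x) I \<longleftrightarrow>
    f absolutely_integrable_on S \<and> integral S f = I"
proof -
  have m: "(\<lambda>x. indicator S x *\<^sub>R f x) \<in> borel_measurable lborel" using assms by simp
  have "set_integrable lebesgue S f \<longleftrightarrow> integrable lborel (\<lambda>x. indicator S x *\<^sub>R f x)"
    unfolding set_integrable_def using integrable_completion[OF m] by simp
  moreover have "integral\<^sup>L lborel (\<lambda>x. indicator S x *\<^sub>R f x) = integral S f"
    if "set_integrable lebesgue S f"
    using set_lebesgue_integral_eq_integral(2)[OF that] integral_completion[OF m]
    unfolding set_lebesgue_integral_def by simp
  ultimately show ?thesis by (auto simp: has_bochner_integral_iff)
qed

lemma has_bochner_integral_exp_neg_square_scaled: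
  fixes a :: real assumes "a > 0"
  shows "has_bochner_integral lborel (\<lambda>u. exp (- (a * u)\<^sup>2)) (sqrt pi / a)"
proof -
  have "has_bochner_integral lborel (\<lambda>u::real. exp (- u\<^sup>2)) (2 *\<^sub>R (sqrt pi / 2))"
    by (rule has_bochner_integral_even_function[OF gaussian_moment_0]) simp
  then show ?thesis
    using lborel_has_bochner_integral_real_affine_iff[where c=a and t=0
        and f="\<lambda>u. exp (- u\<^sup>2)" and x="sqrt pi"] assms
    by (simp add: field_simps)
qed

lemma has_bochner_integral_exp_neg_square_scaled_nonneg:
  fixes a :: real assumes "a > 0"
  shows "has_bochner_integral lborel (\<lambda>u. indicator {0..} u *\<^sub>R exp (- (a * u)\<^sup>2)) (sqrt pi / 2 / a)"
  using gaussian_moment_0 lborel_has_bochner_integral_real_affine_iff[where c=a and t=0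
      and f="\<lambda>u. indicator {0..} u *\<^sub>R exp (- u\<^sup>2)" and x="sqrt pi / 2"] assms
  by (simp add: indicator_def zero_le_mult_iff field_simps)

lemma exp_neg_square_scaled_integral_UNIV:
  fixes a :: real assumes "a > 0"
  shows "(\<lambda>u. exp (- (a * u)\<^sup>2)) absolutely_integrable_on UNIV \<and>
    integral UNIV (\<lambda>u. exp (- (a * u)\<^sup>2)) = sqrt pi / a"
  using has_bochner_integral_exp_neg_square_scaled[OF assms]
    has_bochner_integral_lborel_indicator_iff[of UNIV "\<lambda>u. exp (- (a * u)\<^sup>2)"]
  by simp

lemma exp_neg_square_scaled_integral_pos:
  fixes a :: real assumes "a > 0"
  shows "(\<lambda>u. exp (- (a * u)\<^sup>2)) absolutely_integrable_on {0<..} \<and>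
    integral {0<..} (\<lambda>u. exp (- (a * u)\<^sup>2)) = sqrt pi / 2 / a"
proof -
  have "(\<lambda>u. exp (- (a * u)\<^sup>2)) absolutely_integrable_on {0..} \<and>
      integral {0..} (\<lambda>u. exp (- (a * u)\<^sup>2)) = sqrt pi / 2 / a"
    using has_bochner_integral_exp_neg_square_scaled_nonneg[OF assms]
      has_bochner_integral_lborel_indicator_iff[of "{0..}" "\<lambda>u. exp (- (a * u)\<^sup>2)"]
    by simp
  moreover have N: "negligible {u \<in> {0..} - {0<..}. exp (- (a * u)\<^sup>2) \<noteq> (0::real)}"
    by (rule negligible_subset[of "{0}"]) auto
  moreover have N': "negligible {u \<in> {0<..} - {0..}. exp (- (a * u)\<^sup>2) \<noteq> (0::real)}"
    by (rule negligible_subset[of "{}"]) auto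
  ultimately show ?thesis
    using absolutely_integrable_spike_set_eq[OF N N'] integral_spike_set[OF N N'] by simp
qed

lemma Cauchy_Schloemilch_substitution:
  fixes f :: "real \<Rightarrow> real" and c :: real
  assumes c: "c > 0" and cont: "continuous_on UNIV f" and even: "\<And>v. f (- v) = f v"
    and f: "f absolutely_integrable_on UNIV"
  shows "(\<lambda>u. f (u - c / u)) absolutely_integrable_on {0<..} \<and>
    integral {0<..} (\<lambda>u. f (u - c / u)) = integral UNIV f / 2"
proof -
  define S where "S = ({0<..} :: real set)"
  define \<phi> where "\<phi> = (\<lambda>u::real. u - c / u)"
  define h where "h = (\<lambda>u. f (\<phi> u))"
  have S: "S \<in> sets lebesgue" unfolding S_def by simp
  have d\<phi>: "(\<phi> has_field_derivative (1 + c / u\<^sup>2)) (at u within S)" if "u \<in> S" for u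
    using that unfolding S_def \<phi>_def
    by (auto intro!: derivative_eq_intros simp: power2_eq_square field_simps)
  have mono: "\<phi> u < \<phi> v" if "u \<in> S" "v \<in> S" "u < v" for u v
  proof -
    have "c / v < c / u" using that c unfolding S_def by (intro divide_strict_left_mono) auto
    then show ?thesis using that unfolding \<phi>_def by simp
  qed
  then have inj: "inj_on \<phi> S"
    by (metis inj_onI less_irrefl linorder_neqE)
  have surj: "\<phi> ` S = UNIV"
  proof -
    have "y \<in> \<phi> ` S" for y
    proof
      \<comment> \<open>the positive root of \<open>u\<^sup>2 - y u - c = 0\<close>\<close>
      define u where "u = (y + sqrt (y\<^sup>2 + 4 * c)) / 2"
      have "\<bar>y\<bar> < sqrt (y\<^sup>2 + 4 * c)" using c by (intro real_less_rsqrt) simp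
      then show "u \<in> S" unfolding u_def S_def by simp
      moreover have "u * u - c = y * u"
        using c unfolding u_def by (simp add: algebra_simps power2_eq_square)
      ultimately show "y = \<phi> u" unfolding \<phi>_def S_def by (simp add: field_simps)
    qed
    then show ?thesis by blast
  qed
  have phi_subst: "(\<lambda>u. \<bar>1 + c / u\<^sup>2\<bar> * h u) absolutely_integrable_on S \<and>
      integral S (\<lambda>u. \<bar>1 + c / u\<^sup>2\<bar> * h u) = integral UNIV f"
    using has_absolute_integral_change_of_variables_1'[OF S d\<phi> inj, of f "integral UNIV f"]
      surj f unfolding h_def by simp
  have h: "h absolutely_integrable_on S"
  proof (rule measurable_bounded_by_integrable_imp_absolutely_integrable[OF _ S])
    have "continuous_on S h"
      unfolding h_def \<phi>_def S_def
      by (intro continuous_on_compose2[OF cont] continuous_intros) auto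
    then show "h \<in> borel_measurable (lebesgue_on S)"
      by (rule continuous_imp_measurable_on_sets_lebesgue[OF _ S])
    show "(\<lambda>u. norm (\<bar>1 + c / u\<^sup>2\<bar> * h u)) integrable_on S"
      using phi_subst absolutely_integrable_on_def[of S "\<lambda>u. \<bar>1 + c / u\<^sup>2\<bar> * h u"] by simp
    fix u
    have "1 \<le> \<bar>1 + c / u\<^sup>2\<bar>" using c by simp
    then show "norm (h u) \<le> norm (\<bar>1 + c / u\<^sup>2\<bar> * h u)"
      using mult_right_mono[of 1 "\<bar>1 + c / u\<^sup>2\<bar>" "\<bar>h u\<bar>"] by (simp add: abs_mult)
  qed
  \<comment> \<open>The inversion \<open>u \<mapsto> c / u\<close> preserves \<open>S\<close> and, \<open>f\<close> being even, also \<open>h\<close>.\<close>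
  have d\<rho>: "((\<lambda>u. c / u) has_field_derivative (- c / u\<^sup>2)) (at u within S)" if "u \<in> S" for u
    using that unfolding S_def
    by (auto intro!: derivative_eq_intros simp: power2_eq_square field_simps)
  have inj\<rho>: "inj_on (\<lambda>u. c / u) S" using c unfolding S_def by (auto simp: inj_on_def field_simps)
  have "(\<lambda>u. c / u) ` S = S"
  proof -
    have "y \<in> (\<lambda>u. c / u) ` S" if "y \<in> S" for y
      using c that by (intro image_eqI[of y _ "c / y"]) (auto simp: S_def)
    then show ?thesis using c unfolding S_def by auto
  qed
  then have inv_subst: "(\<lambda>u. \<bar>- c / u\<^sup>2\<bar> * h (c / u)) absolutely_integrable_on S \<and>
      integral S (\<lambda>u. \<bar>- c / u\<^sup>2\<bar> * h (c / u)) = integral S h"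
    using has_absolute_integral_change_of_variables_1'[OF S d\<rho> inj\<rho>, of h "integral S h"] h
    by simp
  have eq: "\<bar>- c / u\<^sup>2\<bar> * h (c / u) = c / u\<^sup>2 * h u" if "u \<in> S" for u
  proof -
    have "\<phi> (c / u) = - \<phi> u" using c that unfolding \<phi>_def S_def by simp
    then show ?thesis using c even unfolding h_def by simp
  qed
  have weighted_int: "(\<lambda>u. c / u\<^sup>2 * h u) absolutely_integrable_on S"
    by (rule absolutely_integrable_spike[OF inv_subst[THEN conjunct1] negligible_empty]) (metis Diff_empty eq)
  have weighted_eq: "integral S (\<lambda>u. c / u\<^sup>2 * h u) = integral S h"
    using inv_subst integral_cong[of S "\<lambda>u. \<bar>- c / u\<^sup>2\<bar> * h (c / u)" "\<lambda>u. c / u\<^sup>2 * h u"] eq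
    by simp
  have "integral UNIV f = integral S (\<lambda>u. h u + c / u\<^sup>2 * h u)"
    unfolding phi_subst[THEN conjunct2, symmetric]
  proof (intro integral_cong)
    fix u :: real
    have "\<bar>1 + c / u\<^sup>2\<bar> = 1 + c / u\<^sup>2"
      by (intro abs_of_nonneg add_nonneg_nonneg) (use c in auto)
    then show "\<bar>1 + c / u\<^sup>2\<bar> * h u = h u + c / u\<^sup>2 * h u" by (simp add: algebra_simps)
  qed
  also have "\<dots> = integral S h + integral S (\<lambda>u. c / u\<^sup>2 * h u)"
    by (intro integral_add set_lebesgue_integral_eq_integral(1) h weighted_int)
  also have "\<dots> = 2 * integral S h"
    using weighted_eq by simp
  finally show ?thesis using h unfolding h_def \<phi>_def S_def by simp
qed

lemma exp_neg_square_Cauchy_Schloemilch_integral: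
  fixes a c :: real assumes a: "a > 0" and c: "c \<ge> 0"
  shows "(\<lambda>u. exp (- (a * (u - c / u))\<^sup>2)) absolutely_integrable_on {0<..} \<and>
    integral {0<..} (\<lambda>u. exp (- (a * (u - c / u))\<^sup>2)) = sqrt pi / (2 * a)"
proof (cases "c = 0")
  case True
  then show ?thesis using exp_neg_square_scaled_integral_pos[OF a] by simp
next
  case False
  have "continuous_on UNIV (\<lambda>v. exp (- (a * v)\<^sup>2))" by (intro continuous_intros)
  then show ?thesis
    using Cauchy_Schloemilch_substitution[of c "\<lambda>v. exp (- (a * v)\<^sup>2)"] False c
      exp_neg_square_scaled_integral_UNIV[OF a]
    by (simp add: power_mult_distrib)
qed

section \<open>The Laplace transform of the heat kernel\<close>

lemma square_substitution_pos:
  fixes f :: "real \<Rightarrow> real"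
  assumes "(\<lambda>u. 2 * u * f (u\<^sup>2)) absolutely_integrable_on {0<..}"
    and "integral {0<..} (\<lambda>u. 2 * u * f (u\<^sup>2)) = I"
  shows "f absolutely_integrable_on {0<..} \<and> integral {0<..} f = I"
proof -
  define S where "S = ({0<..} :: real set)"
  have eq: "\<bar>2 * u\<bar> * f (u\<^sup>2) = 2 * u * f (u\<^sup>2)" if "u \<in> S" for u
    using that unfolding S_def by simp
  have "(\<lambda>u. \<bar>2 * u\<bar> * f (u\<^sup>2)) absolutely_integrable_on S"
    by (rule absolutely_integrable_spike[OF assms(1)[folded S_def] negligible_empty])
      (simp add: eq)
  moreover have "integral S (\<lambda>u. \<bar>2 * u\<bar> * f (u\<^sup>2)) = I"
    using assms(2) integral_cong[of S, OF eq] unfolding S_def by simp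
  moreover have "(\<lambda>u. u\<^sup>2) ` S = S"
  proof -
    have "y \<in> (\<lambda>u. u\<^sup>2) ` S" if "y \<in> S" for y
      using that by (intro image_eqI[of y _ "sqrt y"]) (auto simp: S_def)
    then show ?thesis unfolding S_def by auto
  qed
  moreover have "inj_on (\<lambda>u::real. u\<^sup>2) S"
    unfolding S_def by (auto simp: inj_on_def power2_eq_iff)
  moreover have "((\<lambda>u. u\<^sup>2) has_field_derivative 2 * u) (at u within S)" for u :: real
    by (auto intro!: derivative_eq_intros)
  ultimately show ?thesis
    using has_absolute_integral_change_of_variables_1'[of S "\<lambda>u. u\<^sup>2" "\<lambda>u. 2 * u" f I]
    unfolding S_def by simp
qed

lemma ExpD_Phi_square_eq:
  fixes lam u d :: real
  assumes lam: "lam > 0" and u: "u > 0"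
  defines "s \<equiv> sqrt (2 * lam)"
  shows "2 * u * (ExpD lam (u\<^sup>2) * Phi (u\<^sup>2) d) =
    2 * lam / sqrt (2 * pi) * exp (- s * \<bar>d\<bar>) * exp (- (sqrt lam * (u - \<bar>d\<bar> / s / u))\<^sup>2)"
proof -
  have s: "s > 0" "s\<^sup>2 = 2 * lam" unfolding s_def using lam by auto
  \<comment> \<open>completing the square in the exponent\<close>
  have "(sqrt lam * (u - \<bar>d\<bar> / s / u))\<^sup>2 = lam * (u - \<bar>d\<bar> / s / u)\<^sup>2"
    using lam by (simp add: power_mult_distrib)
  also have "\<dots> = lam * u\<^sup>2 + d\<^sup>2 / (2 * u\<^sup>2) - s * \<bar>d\<bar>"
  proof -
    have "lam = s\<^sup>2 / 2" using s by simp
    then show ?thesis using s u by (simp add: field_simps power2_eq_square abs_mult_self_eq)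
  qed
  finally have square: "lam * u\<^sup>2 + d\<^sup>2 / (2 * u\<^sup>2) = s * \<bar>d\<bar> + (sqrt lam * (u - \<bar>d\<bar> / s / u))\<^sup>2"
    by simp
  have "sqrt (2 * pi * u\<^sup>2) = sqrt (2 * pi) * u" using u by (simp add: real_sqrt_mult)
  then have "2 * u * (ExpD lam (u\<^sup>2) * Phi (u\<^sup>2) d) =
      2 * lam / sqrt (2 * pi) * exp (- (lam * u\<^sup>2 + d\<^sup>2 / (2 * u\<^sup>2)))"
    unfolding ExpD_def Phi_def using u by (simp add: field_simps exp_add[symmetric])
  then show ?thesis unfolding square by (simp add: exp_add[symmetric] algebra_simps)
qed

lemma has_bochner_integral_ExpD_Phi:
  fixes lam d :: real
  assumes lam: "lam > 0"
  shows "has_bochner_integral lborel (\<lambda>t. indicator {0<..} t *\<^sub>R (ExpD lam t * Phi t d))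
    (sqrt (2 * lam) / 2 * exp (- sqrt (2 * lam) * \<bar>d\<bar>))"
proof -
  define s where "s = sqrt (2 * lam)"
  define K where "K = 2 * lam / sqrt (2 * pi) * exp (- s * \<bar>d\<bar>)"
  define G where "G = (\<lambda>u. exp (- (sqrt lam * (u - \<bar>d\<bar> / s / u))\<^sup>2))"
  have "s > 0" unfolding s_def using lam by simp
  then have G: "G absolutely_integrable_on {0<..} \<and> integral {0<..} G = sqrt pi / (2 * sqrt lam)"
    unfolding G_def using lam by (intro exp_neg_square_Cauchy_Schloemilch_integral) auto
  have eq: "2 * u * (ExpD lam (u\<^sup>2) * Phi (u\<^sup>2) d) = K * G u" if "u \<in> {0<..}" for u
    using ExpD_Phi_square_eq[OF lam, of u d] that unfolding K_def G_def s_def by simp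
  have "(\<lambda>u. K * G u) absolutely_integrable_on {0<..}"
    using G set_integrable_mult_right by blast
  then have "(\<lambda>u. 2 * u * (ExpD lam (u\<^sup>2) * Phi (u\<^sup>2) d)) absolutely_integrable_on {0<..}"
    by (rule absolutely_integrable_spike[OF _ negligible_empty]) (simp add: eq)
  moreover have "integral {0<..} (\<lambda>u. 2 * u * (ExpD lam (u\<^sup>2) * Phi (u\<^sup>2) d))
      = K * (sqrt pi / (2 * sqrt lam))"
  proof -
    have "integral {0<..} (\<lambda>u. 2 * u * (ExpD lam (u\<^sup>2) * Phi (u\<^sup>2) d))
        = integral {0<..} (\<lambda>u. K * G u)"
      using eq by (rule integral_cong)
    then show ?thesis using G by simp
  qed
  moreover have "K * (sqrt pi / (2 * sqrt lam)) = sqrt (2 * lam) / 2 * exp (- sqrt (2 * lam) * \<bar>d\<bar>)"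
    unfolding K_def s_def using lam by (simp add: real_sqrt_mult field_simps)
  moreover have "(\<lambda>t. indicator {0<..} t *\<^sub>R (ExpD lam t * Phi t d)) \<in> borel_measurable borel"
    unfolding ExpD_def Phi_def by measurable
  ultimately show ?thesis
    using square_substitution_pos[of "\<lambda>t. ExpD lam t * Phi t d"]
      has_bochner_integral_lborel_indicator_iff by metis
qed

section \<open>Reduction to one-dimensional integrals\<close>

lemma (in product_sigma_finite) integral_PiM_sum_prod:
  fixes f :: "'c \<Rightarrow> 'i \<Rightarrow> 'a \<Rightarrow> 'b::{real_normed_field,banach,second_countable_topology}"
  assumes "finite I" "finite P" and integrable: "\<And>p i. p \<in> P \<Longrightarrow> i \<in> I \<Longrightarrow> integrable (M i) (f p i)"
  shows "(\<integral>g. (\<Sum>p\<in>P. \<Prod>i\<in>I. f p i (g i)) \<partial>Pi\<^sub>M I M) = (\<Sum>p\<in>P. \<Prod>i\<in>I. integral\<^sup>L (M i) (f p i))"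
proof -
  have "(\<integral>g. (\<Sum>p\<in>P. \<Prod>i\<in>I. f p i (g i)) \<partial>Pi\<^sub>M I M) = (\<Sum>p\<in>P. \<integral>g. (\<Prod>i\<in>I. f p i (g i)) \<partial>Pi\<^sub>M I M)"
    using assms by (intro Bochner_Integration.integral_sum product_integrable_prod) auto
  also have "\<dots> = (\<Sum>p\<in>P. \<Prod>i\<in>I. integral\<^sup>L (M i) (f p i))"
    using assms by (intro sum.cong refl product_integral_prod) auto
  finally show ?thesis .
qed

lemma indicator_PiE_eq_prod:
  assumes "finite I" "g \<in> extensional I"
  shows "indicator (PiE I (\<lambda>_. A)) g = (\<Prod>i\<in>I. indicator A (g i) :: real)"
  using assms by (auto simp: indicator_def PiE_iff prod.neutral prod_zero_iff)

lemma Op_prod_eq: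
  fixes h :: "nat \<Rightarrow> real \<Rightarrow> real"
  assumes x: "\<forall>i\<in>{1..k}. x i > 0"
    and integrable: "\<And>\<tau> i. i \<in> {1..k} \<Longrightarrow>
      integrable lborel (\<lambda>t. indicator {0<..} t *\<^sub>R (h i t * Phi t (xbar x (\<tau> i) - xbar x (\<tau> (i - 1)))))"
  shows "Op k (\<lambda>g. \<Prod>i=1..k. h i (g i)) x = (\<Sum>\<tau>\<in>{\<tau>. \<tau> permutes {0..k}}. \<Prod>i=1..k.
    \<integral>t. indicator {0<..} t *\<^sub>R (h i t * Phi t (xbar x (\<tau> i) - xbar x (\<tau> (i - 1)))) \<partial>lborel)"
proof -
  interpret product_sigma_finite "\<lambda>_::nat. lborel :: real measure" by standard
  define D where "D = (\<lambda>(\<tau>::nat \<Rightarrow> nat) i. xbar x (\<tau> i) - xbar x (\<tau> (i - 1)))"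
  have "indicator (PiE {1..k} (\<lambda>_. {0<..})) g * (\<Prod>i=1..k. h i (g i)) * Psi k g x =
      (\<Sum>\<tau>\<in>{\<tau>. \<tau> permutes {0..k}}. \<Prod>i=1..k. indicator {0<..} (g i) *\<^sub>R (h i (g i) * Phi (g i) (D \<tau> i)))"
    if "g \<in> space (Pi\<^sub>M {1..k} (\<lambda>_. lborel))" for g
  proof -
    have "g \<in> extensional {1..k}" using that by (simp add: space_PiM PiE_def)
    moreover have "Psi k g x = (\<Sum>\<tau>\<in>{\<tau>. \<tau> permutes {0..k}}. \<Prod>i=1..k. Phi (g i) (D \<tau> i))"
      unfolding Psi_def D_def using x by (intro sum.cong refl prod.cong) auto
    ultimately show ?thesis
      by (simp add: indicator_PiE_eq_prod sum_distrib_left prod.distrib mult.assoc)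
  qed
  then have "Op k (\<lambda>g. \<Prod>i=1..k. h i (g i)) x = (\<integral>g. (\<Sum>\<tau>\<in>{\<tau>. \<tau> permutes {0..k}}.
      \<Prod>i=1..k. indicator {0<..} (g i) *\<^sub>R (h i (g i) * Phi (g i) (D \<tau> i))) \<partial>Pi\<^sub>M {1..k} (\<lambda>_. lborel))"
    unfolding Op_def by (rule Bochner_Integration.integral_cong[OF refl])
  also have "\<dots> = (\<Sum>\<tau>\<in>{\<tau>. \<tau> permutes {0..k}}. \<Prod>i=1..k.
      \<integral>t. indicator {0<..} t *\<^sub>R (h i t * Phi t (D \<tau> i)) \<partial>lborel)"
    using integrable unfolding D_def
    by (intro integral_PiM_sum_prod finite_permutations) auto
  finally show ?thesis unfolding D_def .
qed

section \<open>Regrouping the exponents\<close>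

lemma xbar_diff:
  assumes "a \<le> b"
  shows "xbar x b - xbar x a = (\<Sum>m\<in>{a<..b}. x m)"
proof -
  have "{1..b} = {1..a} \<union> {a<..b}" "{1..a} \<inter> {a<..b} = {}" using assms by auto
  then show ?thesis unfolding xbar_def by (simp add: sum.union_disjoint)
qed

lemma abs_xbar_diff:
  assumes "\<And>m. m \<in> {min a b<..max a b} \<Longrightarrow> x m \<ge> 0"
  shows "\<bar>xbar x a - xbar x b\<bar> = (\<Sum>m\<in>{min a b<..max a b}. x m)"
proof -
  have "\<bar>xbar x a - xbar x b\<bar> = \<bar>xbar x (max a b) - xbar x (min a b)\<bar>"
  proof (cases "a \<le> b")
    case True
    then show ?thesis using abs_minus_commute[of "xbar x a"] by (simp add: min_def max_def)
  next
    case False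
    then show ?thesis by (simp add: min_def max_def)
  qed
  also have "xbar x (max a b) - xbar x (min a b) = (\<Sum>m\<in>{min a b<..max a b}. x m)"
    by (rule xbar_diff) simp
  also have "\<bar>\<Sum>m\<in>{min a b<..max a b}. x m\<bar> = (\<Sum>m\<in>{min a b<..max a b}. x m)"
    using assms by (intro abs_of_nonneg sum_nonneg)
  finally show ?thesis .
qed

lemma sum_abs_xbar_diff_eq:
  assumes \<tau>: "\<And>j. j \<le> k \<Longrightarrow> \<tau> j \<le> k" and x: "\<And>i. i \<in> {1..k} \<Longrightarrow> x i \<ge> 0"
  shows "(\<Sum>j=1..k. c j * \<bar>xbar x (\<tau> j) - xbar x (\<tau> (j - 1))\<bar>) = (\<Sum>i=1..k. (\<Sum>j\<in>E_set k \<tau> i. c j) * x i)"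
proof -
  define C where "C = (\<lambda>j i. min (\<tau> (j - 1)) (\<tau> j) < i \<and> i \<le> max (\<tau> (j - 1)) (\<tau> j))"
  have abs_diff: "c j * \<bar>xbar x (\<tau> j) - xbar x (\<tau> (j - 1))\<bar> = (\<Sum>i=1..k. if C j i then c j * x i else 0)"
    if j: "j \<in> {1..k}" for j
  proof -
    define lo where "lo = min (\<tau> (j - 1)) (\<tau> j)"
    define hi where "hi = max (\<tau> (j - 1)) (\<tau> j)"
    have "j - 1 \<le> k" "j \<le> k" using j by auto
    then have "hi \<le> k" unfolding hi_def using \<tau> by simp
    then have I: "{lo<..hi} = {i\<in>{1..k}. C j i}" unfolding C_def lo_def[symmetric] hi_def[symmetric] by auto
    have "\<bar>xbar x (\<tau> (j - 1)) - xbar x (\<tau> j)\<bar> = (\<Sum>i\<in>{lo<..hi}. x i)"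
      unfolding lo_def hi_def by (rule abs_xbar_diff) (use \<open>hi \<le> k\<close> x in \<open>auto simp: hi_def\<close>)
    then have "\<bar>xbar x (\<tau> (j - 1)) - xbar x (\<tau> j)\<bar> = (\<Sum>i\<in>{i\<in>{1..k}. C j i}. x i)"
      unfolding I .
    then have "c j * \<bar>xbar x (\<tau> j) - xbar x (\<tau> (j - 1))\<bar> = (\<Sum>i\<in>{i\<in>{1..k}. C j i}. c j * x i)"
      by (simp only: abs_minus_commute sum_distrib_left)
    also have "\<dots> = (\<Sum>i=1..k. if C j i then c j * x i else 0)"
      by (rule sum.inter_filter) simp
    finally show ?thesis .
  qed
  have "(\<Sum>j=1..k. c j * \<bar>xbar x (\<tau> j) - xbar x (\<tau> (j - 1))\<bar>)
      = (\<Sum>j=1..k. \<Sum>i=1..k. if C j i then c j * x i else 0)"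
    using abs_diff by (rule sum.cong[OF refl])
  also have "\<dots> = (\<Sum>i=1..k. \<Sum>j=1..k. if C j i then c j * x i else 0)"
    by (rule sum.swap)
  also have "\<dots> = (\<Sum>i=1..k. (\<Sum>j\<in>E_set k \<tau> i. c j) * x i)"
  proof (rule sum.cong[OF refl])
    fix i
    have "(\<Sum>j\<in>E_set k \<tau> i. c j) * x i = (\<Sum>j\<in>{j\<in>{1..k}. C j i}. c j * x i)"
      unfolding E_set_def C_def by (rule sum_distrib_right)
    also have "\<dots> = (\<Sum>j=1..k. if C j i then c j * x i else 0)"
      by (rule sum.inter_filter) simp
    finally show "(\<Sum>j=1..k. if C j i then c j * x i else 0) = (\<Sum>j\<in>E_set k \<tau> i. c j) * x i" ..
  qed
  finally show ?thesis .
qed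

lemma E_set_nonempty:
  assumes \<tau>: "\<tau> permutes {0..k}" and i: "i \<in> {1..k}"
  shows "E_set k \<tau> i \<noteq> {}"
proof
  assume E: "E_set k \<tau> i = {}"
  \<comment> \<open>then the walk \<open>\<tau> 0, \<tau> 1, \<dots>, \<tau> k\<close> never crosses from below \<open>i\<close> to above it or back,
    contradicting that it visits both \<open>0\<close> and \<open>i\<close>\<close>
  have side: "(\<tau> j < i) = (\<tau> 0 < i)" if "j \<le> k" for j
    using that
  proof (induction j)
    case (Suc j)
    then have "Suc j \<notin> E_set k \<tau> i" using E by simp
    then have "\<not> (min (\<tau> j) (\<tau> (Suc j)) < i \<and> i \<le> max (\<tau> j) (\<tau> (Suc j)))"
      using Suc.prems unfolding E_set_def by auto
    then have "(\<tau> (Suc j) < i) = (\<tau> j < i)" by (auto simp: min_def max_def split: if_splits)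
    then show ?case using Suc by simp
  qed simp
  have "\<tau> ` {0..k} = {0..k}" by (rule permutes_image[OF \<tau>])
  then have "0 \<in> \<tau> ` {0..k}" "i \<in> \<tau> ` {0..k}" using i by auto
  then obtain a b where "a \<le> k" "\<tau> a = 0" "b \<le> k" "\<tau> b = i" by auto
  then show False using side[of a] side[of b] i by auto
qed

lemma F_fun_pos:
  assumes "\<tau> permutes {0..k}" and "i \<in> {1..k}" and lam: "\<forall>j\<in>{1..k}. lam j > 0"
  shows "F_fun k \<tau> i lam > 0"
  unfolding F_fun_def
proof (rule sum_pos)
  show "finite (E_set k \<tau> i)" unfolding E_set_def by simp
  show "E_set k \<tau> i \<noteq> {}" using assms(1,2) by (rule E_set_nonempty)
qed (use lam in \<open>auto simp: E_set_def\<close>)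

lemma prod_Laplace_factors_eq_w_fun:
  assumes \<tau>: "\<tau> permutes {0..k}" and lam: "\<forall>i\<in>{1..k}. lam i > 0" and x: "\<forall>i\<in>{1..k}. x i > 0"
  shows "(\<Prod>j=1..k. sqrt (2 * lam j) / 2 * exp (- sqrt (2 * lam j) * \<bar>xbar x (\<tau> j) - xbar x (\<tau> (j - 1))\<bar>))
    = w_fun k \<tau> lam * (\<Prod>i=1..k. ExpD (F_fun k \<tau> i lam) (x i))"
proof -
  define s where "s = (\<lambda>j. sqrt (2 * lam j))"
  define F where "F = (\<lambda>i. F_fun k \<tau> i lam)"
  define a where "a = (\<lambda>j. \<bar>xbar x (\<tau> j) - xbar x (\<tau> (j - 1))\<bar>)"
  have "(\<Prod>i=1..k. F i) > 0"
    unfolding F_def using F_fun_pos[OF \<tau> _ lam] by (intro prod_pos) auto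
  have "\<And>j. j \<le> k \<Longrightarrow> \<tau> j \<le> k" using permutes_in_image[OF \<tau>] by auto
  moreover have "\<And>i. i \<in> {1..k} \<Longrightarrow> x i \<ge> 0" using x by (simp add: less_imp_le)
  ultimately have exponent: "(\<Sum>j=1..k. s j * a j) = (\<Sum>i=1..k. F i * x i)"
    unfolding a_def F_def F_fun_def s_def by (rule sum_abs_xbar_diff_eq)
  have "(\<Prod>j=1..k. s j / 2 * exp (- s j * a j)) = (\<Prod>j=1..k. s j) / 2 ^ k * exp (- (\<Sum>j=1..k. s j * a j))"
    by (simp add: prod.distrib prod_dividef exp_sum sum_negf[symmetric])
  also have "\<dots> = (1 / 2 ^ k * ((\<Prod>j=1..k. s j) / (\<Prod>i=1..k. F i))) *
      ((\<Prod>i=1..k. F i) * exp (- (\<Sum>i=1..k. F i * x i)))"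
  proof -
    have "P / 2 ^ k * E = 1 / 2 ^ k * (P / Q) * (Q * E)" if "Q \<noteq> 0" for P Q E :: real
      using that by simp
    moreover have "(\<Prod>i=1..k. F i) \<noteq> 0" using \<open>(\<Prod>i=1..k. F i) > 0\<close> by linarith
    ultimately show ?thesis unfolding exponent by blast
  qed
  also have "\<dots> = w_fun k \<tau> lam * (\<Prod>i=1..k. ExpD (F i) (x i))"
    unfolding w_fun_def s_def F_def ExpD_def using x
    by (simp add: prod_dividef prod.distrib exp_sum sum_negf[symmetric] less_imp_le)
  finally show ?thesis unfolding s_def a_def F_def .
qed

theorem lemma1:
  fixes k :: nat and lam x :: "nat \<Rightarrow> real"
  assumes "k \<ge> 1"
    and "\<forall>i\<in>{1..k}. lam i > 0"
    and "\<forall>i\<in>{1..k}. x i > 0"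
  shows "Op k (\<lambda>g. \<Prod>i=1..k. ExpD (lam i) (g i)) x =
    (\<Sum>\<tau>\<in>{\<tau>. \<tau> permutes {0..k}}. w_fun k \<tau> lam * (\<Prod>i=1..k. ExpD (F_fun k \<tau> i lam) (x i)))"
proof -
  note lam = assms(2) and x = assms(3)
  define D where "D = (\<lambda>(\<tau>::nat \<Rightarrow> nat) i. xbar x (\<tau> i) - xbar x (\<tau> (i - 1)))"
  have Laplace: "has_bochner_integral lborel (\<lambda>t. indicator {0<..} t *\<^sub>R (ExpD (lam i) t * Phi t (D \<tau> i)))
      (sqrt (2 * lam i) / 2 * exp (- sqrt (2 * lam i) * \<bar>D \<tau> i\<bar>))" if "i \<in> {1..k}" for \<tau> i
    using lam that by (intro has_bochner_integral_ExpD_Phi) auto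
  have "Op k (\<lambda>g. \<Prod>i=1..k. ExpD (lam i) (g i)) x = (\<Sum>\<tau>\<in>{\<tau>. \<tau> permutes {0..k}}. \<Prod>i=1..k.
      \<integral>t. indicator {0<..} t *\<^sub>R (ExpD (lam i) t * Phi t (D \<tau> i)) \<partial>lborel)"
    using Laplace unfolding D_def by (intro Op_prod_eq x) (simp add: has_bochner_integral_iff)
  also have "\<dots> = (\<Sum>\<tau>\<in>{\<tau>. \<tau> permutes {0..k}}. \<Prod>i=1..k.
      sqrt (2 * lam i) / 2 * exp (- sqrt (2 * lam i) * \<bar>D \<tau> i\<bar>))"
    using Laplace by (intro sum.cong prod.cong refl has_bochner_integral_integral_eq) auto
  also have "\<dots> = (\<Sum>\<tau>\<in>{\<tau>. \<tau> permutes {0..k}}. w_fun k \<tau> lam * (\<Prod>i=1..k. ExpD (F_fun k \<tau> i lam) (x i)))"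
    unfolding D_def using lam x by (intro sum.cong refl prod_Laplace_factors_eq_w_fun) auto
  finally show ?thesis .
qed

end
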